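(* For all integers $n\ge 2$ and $1\le k<n$, the graph $H_B(n,k)$ is connected and its circuit rank (cyclomatic number $|E|-|V|+1$) equals $$\binom{n}{k}\left(\sum_{s=1}^{k}2^{s-1}\binom{k}{s}-1+\sum_{t=1}^{n-k}2^{k+t-1}\binom{n-k}{t}\right)-\sum_{i=1}^n 2^{i-1}\binom{n}{i}+1.$$
   Context: Fix integers $n\ge 2$ and $1\le k<n$ and positive real numbers $x_1<x_2<\dots<x_n$. Let $\mathscr{B}_n=\{\pm x_1,\pm x_2,\dots,\pm x_{n-1},x_n\}$ (so $-x_n\notin\mathscr{B}_n$). Let $\phi(\mathscr{B}_n)$ be the family of all nonempty subsets $S\subseteq\mathscr{B}_n$ whose elements have pairwise distinct absolute values and whose element of largest absolute value is positive. Let $\mathscr{B}_n^+=\{x_1,\dots,x_n\}$, let $V_1$ be the set of all $k$-element subsets of $\mathscr{B}_n^+$, and let $V_2=\phi(\mathscr{B}_n)\setminus V_1$. For $A\in\phi(\mathscr{B}_n)$ put $A^\dagger=\{|a|:a\in A\}$. The bipartite Kneser B type-$k$ graph $H_B(n,k)$ is the simple graph with vertex set $V_1\cup V_2$ in which $X\in V_1$ and $Y\in V_2$ are adjacent if and only if $X\subseteq Y^\dagger$ or $Y^\dagger\subseteq X$, and there are no other edges. *)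

theory Defs
  imports Complex_Main
begin

definition B_set :: "(nat \<Rightarrow> real) \<Rightarrow> nat \<Rightarrow> real set" where
  "B_set x n = {x i | i. 1 \<le> i \<and> i \<le> n} \<union> {- x i | i. 1 \<le> i \<and> i < n}"

definition B_pos :: "(nat \<Rightarrow> real) \<Rightarrow> nat \<Rightarrow> real set" where
  "B_pos x n = {x i | i. 1 \<le> i \<and> i \<le> n}"

definition phi_B :: "(nat \<Rightarrow> real) \<Rightarrow> nat \<Rightarrow> real set set" where
  "phi_B x n = {S. S \<subseteq> B_set x n \<and> S \<noteq> {} \<and> inj_on abs S \<and>
                  (\<exists>a\<in>S. a > 0 \<and> (\<forall>b\<in>S. \<bar>b\<bar> \<le> \<bar>a\<bar>))}"

definition HB_V1 :: "(nat \<Rightarrow> real) \<Rightarrow> nat \<Rightarrow> nat \<Rightarrow> real set set" where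
  "HB_V1 x n k = {X. X \<subseteq> B_pos x n \<and> card X = k}"

definition HB_V2 :: "(nat \<Rightarrow> real) \<Rightarrow> nat \<Rightarrow> nat \<Rightarrow> real set set" where
  "HB_V2 x n k = phi_B x n - HB_V1 x n k"

definition HB_verts :: "(nat \<Rightarrow> real) \<Rightarrow> nat \<Rightarrow> nat \<Rightarrow> real set set" where
  "HB_verts x n k = HB_V1 x n k \<union> HB_V2 x n k"

definition HB_edges :: "(nat \<Rightarrow> real) \<Rightarrow> nat \<Rightarrow> nat \<Rightarrow> real set set set" where
  "HB_edges x n k = {{X, Y} | X Y. X \<in> HB_V1 x n k \<and> Y \<in> HB_V2 x n k \<and>
                        (X \<subseteq> abs ` Y \<or> abs ` Y \<subseteq> X)}"

definition graph_connected :: "'a set \<Rightarrow> 'a set set \<Rightarrow> bool" where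
  "graph_connected V E \<longleftrightarrow> V \<noteq> {} \<and>
     (\<forall>u\<in>V. \<forall>v\<in>V. (u, v) \<in> {(a, b). {a, b} \<in> E}\<^sup>*)"

definition circuit_rank :: "'a set \<Rightarrow> 'a set set \<Rightarrow> int" where
  "circuit_rank V E = int (card E) - int (card V) + 1"

end

theory Submission
  imports Defs
begin

text \<open>A vertex Y of H_B(n,k) is determined by its support |Y| \<subseteq> {x_1,...,x_n} together with a
  sign for every element except the largest, so each nonempty support S carries 2^(|S|-1) vertices;
  summing over supports by size gives |V|. A k-set X is adjacent exactly to the vertices whose
  support is a nonempty subset of X, or X together with a nonempty subset of its complement (X itself
  excepted); hence all vertices of V_1 have the same degree, and since V_1 is independent, |E| is
  (n choose k) times that degree. The graph is connected because every support is comparable with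
  some k-set and two distinct k-sets X, X' are both adjacent to X \<union> X'.\<close>

lemma sum_nonempty_subsets_by_card:
  fixes f :: "nat \<Rightarrow> 'a::comm_semiring_1"
  assumes "finite A"
  shows "(\<Sum>U\<in>Pow A - {{}}. f (card U)) = (\<Sum>i=1..card A. f i * of_nat (card A choose i))"
proof -
  have "card ` (Pow A - {{}}) \<subseteq> {1..card A}"
    using assms by (auto simp: card_mono Suc_le_eq card_gt_0_iff dest: finite_subset)
  then have "(\<Sum>U\<in>Pow A - {{}}. f (card U))
      = (\<Sum>i=1..card A. \<Sum>U\<in>{U. U \<in> Pow A - {{}} \<and> card U = i}. f (card U))"
    using assms by (intro sum.group[symmetric]) auto
  also have "\<dots> = (\<Sum>i=1..card A. \<Sum>U\<in>{U. U \<subseteq> A \<and> card U = i}. f i)"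
    by (intro sum.cong refl) auto
  also have "\<dots> = (\<Sum>i=1..card A. f i * of_nat (card A choose i))"
    using n_subsets[OF assms] by (simp add: mult.commute)
  finally show ?thesis .
qed

lemma graph_connected_via_hubs:
  assumes "A \<subseteq> V" "A \<noteq> {}"
    and reach: "\<And>v. v \<in> V \<Longrightarrow> \<exists>a\<in>A. v = a \<or> {a, v} \<in> E"
    and common: "\<And>a b. a \<in> A \<Longrightarrow> b \<in> A \<Longrightarrow> a \<noteq> b \<Longrightarrow> \<exists>c. {a, c} \<in> E \<and> {c, b} \<in> E"
  shows "graph_connected V E"
  unfolding graph_connected_def
proof (intro conjI ballI)
  show "V \<noteq> {}" using assms(1,2) by blast
next
  let ?R = "{(a, b). {a, b} \<in> E}"
  have sym: "(b, a) \<in> ?R\<^sup>*" if "(a, b) \<in> ?R\<^sup>*" for a b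
    using sym_rtrancl[of ?R] that by (auto simp: sym_def insert_commute)
  have hub: "\<exists>a\<in>A. (a, v) \<in> ?R\<^sup>*" if "v \<in> V" for v
    using reach[OF that] by blast
  have hubs: "(a, b) \<in> ?R\<^sup>*" if "a \<in> A" "b \<in> A" for a b
    using common[OF that] by (cases "a = b") (auto intro: rtrancl_into_rtrancl)
  fix u v assume "u \<in> V" "v \<in> V"
  then obtain a b where "a \<in> A" "(a, u) \<in> ?R\<^sup>*" "b \<in> A" "(b, v) \<in> ?R\<^sup>*"
    using hub by blast
  then show "(u, v) \<in> ?R\<^sup>*"
    using sym hubs by (meson rtrancl_trans)
qed

lemma card_bipartite_edges:
  assumes "finite A" and "\<And>X. X \<in> A \<Longrightarrow> finite (N X)" and "\<And>X. X \<in> A \<Longrightarrow> N X \<inter> A = {}"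
  shows "card {{X, Y} | X Y. X \<in> A \<and> Y \<in> N X} = (\<Sum>X\<in>A. card (N X))"
proof -
  have "inj_on (\<lambda>(X, Y). {X, Y}) (Sigma A N)"
    using assms(3) by (auto simp: inj_on_def doubleton_eq_iff)
  moreover have "{{X, Y} | X Y. X \<in> A \<and> Y \<in> N X} = (\<lambda>(X, Y). {X, Y}) ` Sigma A N"
    by auto
  ultimately show ?thesis
    using assms(1,2) by (simp add: card_image)
qed

lemma comparable_subsets_iff:
  assumes "A \<subseteq> P" "A \<noteq> {}" "X \<subseteq> P"
  shows "(X \<subseteq> A \<or> A \<subseteq> X) \<longleftrightarrow> A \<in> (Pow X - {{}}) \<union> (\<union>) X ` (Pow (P - X) - {{}})"
proof
  assume "X \<subseteq> A \<or> A \<subseteq> X"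
  moreover have "A = X \<union> (A - X)" if "X \<subseteq> A" using that by blast
  ultimately show "A \<in> (Pow X - {{}}) \<union> (\<union>) X ` (Pow (P - X) - {{}})"
    using assms by blast
qed (use assms in blast)

lemma sum_nonempty_extensions_by_card:
  fixes f :: "nat \<Rightarrow> 'a::comm_semiring_1"
  assumes "finite P" "X \<subseteq> P"
  shows "(\<Sum>S\<in>(\<union>) X ` (Pow (P - X) - {{}}). f (card S))
    = (\<Sum>t=1..card P - card X. f (card X + t) * of_nat ((card P - card X) choose t))"
proof -
  have "finite X" using assms finite_subset by blast
  have "inj_on ((\<union>) X) (Pow (P - X) - {{}})" by (rule inj_onI) blast
  then have "(\<Sum>S\<in>(\<union>) X ` (Pow (P - X) - {{}}). f (card S))
      = (\<Sum>U\<in>Pow (P - X) - {{}}. f (card (X \<union> U)))"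
    by (simp add: sum.reindex)
  also have "\<dots> = (\<Sum>U\<in>Pow (P - X) - {{}}. f (card X + card U))"
  proof (intro sum.cong refl)
    fix U assume "U \<in> Pow (P - X) - {{}}"
    then have "finite U" "X \<inter> U = {}" using assms finite_subset by auto
    then show "f (card (X \<union> U)) = f (card X + card U)"
      using card_Un_disjoint[OF \<open>finite X\<close>] by simp
  qed
  also have "\<dots> = (\<Sum>t=1..card (P - X). f (card X + t) * of_nat (card (P - X) choose t))"
    using sum_nonempty_subsets_by_card[of "P - X" "\<lambda>t. f (card X + t)"] assms by simp
  finally show ?thesis
    using card_Diff_subset[OF \<open>finite X\<close> assms(2)] by simp
qed

definition sign_flip :: "'a::linordered_idom set \<Rightarrow> 'a set \<Rightarrow> 'a set" where
  "sign_flip S N = (S - N) \<union> uminus ` N"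

context
  fixes S N :: "'a::linordered_idom set"
  assumes S_pos: "\<forall>a\<in>S. 0 < a" and N_sub: "N \<subseteq> S"
begin

lemma mem_sign_flip_iff:
  "y \<in> sign_flip S N \<longleftrightarrow> (0 < y \<and> y \<in> S - N) \<or> (y < 0 \<and> - y \<in> N)"
proof
  assume "y \<in> sign_flip S N"
  then show "(0 < y \<and> y \<in> S - N) \<or> (y < 0 \<and> - y \<in> N)"
    using S_pos N_sub unfolding sign_flip_def by auto
next
  assume "(0 < y \<and> y \<in> S - N) \<or> (y < 0 \<and> - y \<in> N)"
  then show "y \<in> sign_flip S N"
    unfolding sign_flip_def by (auto intro: image_eqI[of y uminus "- y"])
qed

lemma abs_image_sign_flip: "abs ` sign_flip S N = S"
proof (intro equalityI subsetI)
  fix a assume "a \<in> abs ` sign_flip S N"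
  then obtain y where "y \<in> sign_flip S N" "a = \<bar>y\<bar>" by blast
  then show "a \<in> S"
    using N_sub by (auto simp: mem_sign_flip_iff)
next
  fix a assume a: "a \<in> S"
  then have "0 < a" using S_pos by blast
  show "a \<in> abs ` sign_flip S N"
  proof (cases "a \<in> N")
    case True
    then have "- a \<in> sign_flip S N" using \<open>0 < a\<close> by (simp add: mem_sign_flip_iff)
    then show ?thesis using \<open>0 < a\<close> by (intro image_eqI[of a abs "- a"]) auto
  next
    case False
    then have "a \<in> sign_flip S N" using a \<open>0 < a\<close> by (simp add: mem_sign_flip_iff)
    then show ?thesis using \<open>0 < a\<close> by (intro image_eqI[of a abs a]) auto
  qed
qed

lemma inj_on_abs_sign_flip: "inj_on abs (sign_flip S N)"
proof (rule inj_onI)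
  fix y z assume "y \<in> sign_flip S N" "z \<in> sign_flip S N" "\<bar>y\<bar> = \<bar>z\<bar>"
  then show "y = z"
    unfolding mem_sign_flip_iff
    by (metis DiffD2 abs_of_neg abs_of_pos minus_minus)
qed

end

lemma inj_on_sign_flip:
  fixes S :: "'a::linordered_idom set"
  assumes "\<forall>a\<in>S. 0 < a"
  shows "inj_on (sign_flip S) (Pow S)"
proof (rule inj_onI)
  fix N M assume N: "N \<in> Pow S" and M: "M \<in> Pow S" and eq: "sign_flip S N = sign_flip S M"
  have "a \<in> N \<longleftrightarrow> a \<in> M" if "a \<in> S" for a
  proof -
    have "0 < a" using that assms by blast
    then show ?thesis
      using eq mem_sign_flip_iff[OF assms, of N "- a"] mem_sign_flip_iff[OF assms, of M "- a"] N M
      by auto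
  qed
  then show "N = M" using N M by blast
qed

lemma negatives_subset_abs_image:
  fixes Y :: "'a::linordered_idom set"
  shows "uminus ` {y \<in> Y. y < 0} \<subseteq> abs ` Y"
proof
  fix a assume "a \<in> uminus ` {y \<in> Y. y < 0}"
  then obtain y where "y \<in> Y" "y < 0" "a = - y" by blast
  then show "a \<in> abs ` Y" by (intro image_eqI[of a abs y]) auto
qed

lemma sign_flip_negatives:
  fixes Y :: "'a::linordered_idom set"
  assumes inj: "inj_on abs Y" and "0 \<notin> Y"
  shows "Y = sign_flip (abs ` Y) (uminus ` {y \<in> Y. y < 0})"
proof -
  let ?N = "uminus ` {y \<in> Y. y < 0}"
  have pos: "\<forall>a\<in>abs ` Y. 0 < a" using \<open>0 \<notin> Y\<close> by auto
  note mem_iff = mem_sign_flip_iff[OF pos negatives_subset_abs_image]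
  show ?thesis
  proof (intro equalityI subsetI)
    fix y assume y: "y \<in> Y"
    show "y \<in> sign_flip (abs ` Y) ?N"
    proof (cases "y < 0")
      case True
      then show ?thesis using y by (simp add: mem_iff image_iff)
    next
      case False
      then have "0 < y" using y \<open>0 \<notin> Y\<close> by (cases "y = 0") auto
      have "y \<notin> ?N"
      proof
        assume "y \<in> ?N"
        then obtain z where "z \<in> Y" "z < 0" "y = - z" by blast
        then show False using inj_onD[OF inj, of y z] y by auto
      qed
      moreover have "y \<in> abs ` Y" using y \<open>0 < y\<close> by (intro image_eqI[of y abs y]) auto
      ultimately show ?thesis using \<open>0 < y\<close> by (simp add: mem_iff)
    qed
  next
    fix y assume "y \<in> sign_flip (abs ` Y) ?N"
    then consider "0 < y" "y \<in> abs ` Y" "y \<notin> ?N" | "y < 0" "- y \<in> ?N"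
      unfolding mem_iff by blast
    then show "y \<in> Y"
    proof cases
      case 1
      then obtain z where "z \<in> Y" "y = \<bar>z\<bar>" by blast
      then show ?thesis using 1 by (cases "z < 0") (auto simp: image_iff)
    next
      case 2
      then show ?thesis by auto
    qed
  qed
qed

lemma abs_fibre_eq_sign_flips:
  fixes S :: "'a::linordered_idom set"
  assumes "\<forall>a\<in>S. 0 < a"
  shows "{Y. abs ` Y = S \<and> inj_on abs Y} = sign_flip S ` Pow S"
proof
  show "sign_flip S ` Pow S \<subseteq> {Y. abs ` Y = S \<and> inj_on abs Y}"
    by (rule image_subsetI) (simp add: abs_image_sign_flip[OF assms] inj_on_abs_sign_flip[OF assms])
next
  show "{Y. abs ` Y = S \<and> inj_on abs Y} \<subseteq> sign_flip S ` Pow S"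
  proof clarify
    fix Y assume Y: "inj_on abs Y" and S: "S = abs ` Y"
    have "0 \<notin> Y" using assms S by (metis abs_zero image_eqI less_irrefl)
    show "Y \<in> sign_flip (abs ` Y) ` Pow (abs ` Y)"
      using sign_flip_negatives[OF Y \<open>0 \<notin> Y\<close>] negatives_subset_abs_image[of Y]
      by (intro image_eqI[where x = "uminus ` {y \<in> Y. y < 0}"]) simp_all
  qed
qed

locale increasing_pos_seq =
  fixes x :: "nat \<Rightarrow> real" and n :: nat
  assumes x_1_pos: "0 < x 1"
    and x_strict_mono: "\<And>i j. 1 \<le> i \<Longrightarrow> i < j \<Longrightarrow> j \<le> n \<Longrightarrow> x i < x j"
begin

lemma x_pos: "1 \<le> i \<Longrightarrow> i \<le> n \<Longrightarrow> 0 < x i"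
  using x_1_pos x_strict_mono[of 1 i] by (cases "i = 1") auto

lemma x_le_x_n: "1 \<le> i \<Longrightarrow> i \<le> n \<Longrightarrow> x i \<le> x n"
  using x_strict_mono[of i n] by (cases "i = n") auto

lemma inj_on_x: "inj_on x {1..n}"
proof (rule inj_onI)
  fix i j assume "i \<in> {1..n}" "j \<in> {1..n}" "x i = x j"
  then show "i = j" using x_strict_mono[of i j] x_strict_mono[of j i]
    by (metis atLeastAtMost_iff less_irrefl linorder_neqE_nat)
qed

lemma B_pos_eq: "B_pos x n = x ` {1..n}"
  unfolding B_pos_def by auto

lemma B_set_eq: "B_set x n = x ` {1..n} \<union> (\<lambda>i. - x i) ` {1..<n}"
  unfolding B_set_def by auto

lemma finite_B_pos: "finite (B_pos x n)"
  by (simp add: B_pos_eq)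

lemma card_B_pos: "card (B_pos x n) = n"
  using card_image[OF inj_on_x] by (simp add: B_pos_eq)

lemma B_pos_gt_0: "a \<in> B_pos x n \<Longrightarrow> 0 < a"
  using x_pos by (auto simp: B_pos_eq)

lemma B_pos_le_x_n: "a \<in> B_pos x n \<Longrightarrow> a \<le> x n"
  using x_le_x_n by (auto simp: B_pos_eq)

lemma B_pos_subset_B_set: "B_pos x n \<subseteq> B_set x n"
  by (auto simp: B_pos_eq B_set_eq)

lemma abs_in_B_pos:
  assumes "y \<in> B_set x n"
  shows "\<bar>y\<bar> \<in> B_pos x n"
proof -
  obtain i where i: "1 \<le> i" "i \<le> n" "y = x i \<or> y = - x i"
    using assms by (auto simp: B_set_eq)
  then have "\<bar>y\<bar> = x i" using x_pos[OF i(1,2)] by auto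
  then show ?thesis using i by (auto simp: B_pos_eq)
qed

lemma uminus_in_B_set:
  assumes "a \<in> B_pos x n" "a \<noteq> x n"
  shows "- a \<in> B_set x n"
proof -
  obtain i where i: "1 \<le> i" "i \<le> n" "a = x i" using assms by (auto simp: B_pos_eq)
  then have "i < n" using assms by (cases "i = n") auto
  then show ?thesis using i by (auto simp: B_set_eq)
qed

lemma abs_image_phi_B: "Y \<in> phi_B x n \<Longrightarrow> abs ` Y \<in> Pow (B_pos x n) - {{}}"
  unfolding phi_B_def using abs_in_B_pos by auto

lemma finite_phi_B: "finite (phi_B x n)"
proof -
  have "phi_B x n \<subseteq> Pow (B_set x n)" unfolding phi_B_def by auto
  then show ?thesis by (rule finite_subset) (simp add: B_set_eq)
qed

lemma B_pos_subset_in_phi_B: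
  assumes T: "T \<subseteq> B_pos x n" "T \<noteq> {}"
  shows "T \<in> phi_B x n" and "abs ` T = T"
proof -
  have finT: "finite T" using T finite_B_pos finite_subset by blast
  have ab: "\<And>a. a \<in> T \<Longrightarrow> \<bar>a\<bar> = a" using T B_pos_gt_0 by force
  show "abs ` T = T" using ab by force
  have "inj_on abs T" by (rule inj_onI) (simp add: ab)
  moreover have "Max T \<in> T" using finT T by simp
  moreover have "\<forall>b\<in>T. \<bar>b\<bar> \<le> \<bar>Max T\<bar>" using finT T ab \<open>Max T \<in> T\<close> by simp
  ultimately show "T \<in> phi_B x n" unfolding phi_B_def
    using T B_pos_subset_B_set B_pos_gt_0[of "Max T"] by blast
qed

lemma phi_B_abs_fibre_subset:
  assumes S: "S \<subseteq> B_pos x n" "S \<noteq> {}" and Y: "Y \<in> phi_B x n" "abs ` Y = S"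
  shows "Y \<in> sign_flip S ` Pow (S - {Max S})"
proof -
  have "finite S" using S finite_B_pos finite_subset by blast
  then have m: "Max S \<in> S" "\<And>a. a \<in> S \<Longrightarrow> a \<le> Max S" using S by auto
  have pos: "\<forall>a\<in>S. 0 < a" using S B_pos_gt_0 by blast
  have top: "\<exists>a\<in>Y. 0 < a \<and> (\<forall>b\<in>Y. \<bar>b\<bar> \<le> \<bar>a\<bar>)"
    and "Y \<in> {Y. abs ` Y = S \<and> inj_on abs Y}"
    using Y unfolding phi_B_def by auto
  from this(2) have "Y \<in> sign_flip S ` Pow S"
    unfolding abs_fibre_eq_sign_flips[OF pos] .
  then obtain N where N: "N \<subseteq> S" and Y_eq: "Y = sign_flip S N" by blast
  obtain a where a: "a \<in> Y" "0 < a" "\<forall>b\<in>Y. \<bar>b\<bar> \<le> \<bar>a\<bar>" using top by blast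
  have "a \<in> S - N" using a(1,2) mem_sign_flip_iff[OF pos N, of a] Y_eq by simp
  moreover have "Max S \<in> abs ` Y" using m(1) Y(2) by simp
  then obtain b where "b \<in> Y" "Max S = \<bar>b\<bar>" by (rule imageE)
  then have "Max S \<le> a" using a by simp
  ultimately have "Max S \<notin> N" using m(2)[of a] by simp
  then have "N \<in> Pow (S - {Max S})" using N by blast
  then show ?thesis unfolding Y_eq by (rule imageI)
qed

lemma sign_flip_in_phi_B:
  assumes S: "S \<subseteq> B_pos x n" "S \<noteq> {}" and N: "N \<subseteq> S - {Max S}"
  shows "sign_flip S N \<in> phi_B x n"
proof -
  have "finite S" using S finite_B_pos finite_subset by blast
  then have m: "Max S \<in> S" "\<And>a. a \<in> S \<Longrightarrow> a \<le> Max S" using S by auto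
  have pos: "\<forall>a\<in>S. 0 < a" using S B_pos_gt_0 by blast
  have NS: "N \<subseteq> S" using N by blast
  note mem_iff = mem_sign_flip_iff[OF pos NS]
  \<comment> \<open>x_n has no negative counterpart in B_set, but it can only occur as Max S, which stays positive.\<close>
  have "x n \<notin> N"
  proof
    assume "x n \<in> N"
    then have "Max S \<le> x n" using B_pos_le_x_n m(1) S by blast
    moreover have "x n \<le> Max S" using \<open>x n \<in> N\<close> N m(2) by blast
    ultimately show False using \<open>x n \<in> N\<close> N by auto
  qed
  have "y \<in> B_set x n" if "y \<in> sign_flip S N" for y
  proof (cases "0 < y")
    case True
    then have "y \<in> S" using that mem_iff by simp
    then show ?thesis using S B_pos_subset_B_set by blast
  next
    case False
    then have "- y \<in> N" using that mem_iff by simp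
    then have "- (- y) \<in> B_set x n"
      using N S \<open>x n \<notin> N\<close> by (intro uminus_in_B_set) auto
    then show ?thesis by simp
  qed
  moreover have "Max S \<in> sign_flip S N" using mem_iff m(1) N pos by auto
  moreover have "\<bar>b\<bar> \<le> \<bar>Max S\<bar>" if "b \<in> sign_flip S N" for b
  proof -
    have "\<bar>b\<bar> \<in> S" using abs_image_sign_flip[OF pos NS] that by blast
    then show ?thesis using m(2) pos m(1) by fastforce
  qed
  ultimately show ?thesis
    unfolding phi_B_def using inj_on_abs_sign_flip[OF pos NS] pos m(1) by blast
qed

lemma phi_B_abs_fibre:
  assumes "S \<subseteq> B_pos x n" "S \<noteq> {}"
  shows "{Y \<in> phi_B x n. abs ` Y = S} = sign_flip S ` Pow (S - {Max S})"
proof (intro equalityI subsetI)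
  fix Y assume "Y \<in> {Y \<in> phi_B x n. abs ` Y = S}"
  then show "Y \<in> sign_flip S ` Pow (S - {Max S})"
    using phi_B_abs_fibre_subset[OF assms] by blast
next
  fix Y assume "Y \<in> sign_flip S ` Pow (S - {Max S})"
  then obtain N where N: "N \<subseteq> S - {Max S}" and Y: "Y = sign_flip S N" by blast
  have "\<forall>a\<in>S. 0 < a" "N \<subseteq> S" using assms B_pos_gt_0 N by blast+
  then show "Y \<in> {Y \<in> phi_B x n. abs ` Y = S}"
    using sign_flip_in_phi_B[OF assms N] abs_image_sign_flip Y by simp
qed

lemma card_phi_B_abs_fibre:
  assumes "S \<subseteq> B_pos x n" "S \<noteq> {}"
  shows "card {Y \<in> phi_B x n. abs ` Y = S} = 2 ^ (card S - 1)"
proof -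
  have "finite S" using assms finite_B_pos finite_subset by blast
  then have "Max S \<in> S" using assms by simp
  have "inj_on (sign_flip S) (Pow (S - {Max S}))"
    using inj_on_sign_flip[of S] assms B_pos_gt_0 by (blast intro: inj_on_subset)
  then have "card {Y \<in> phi_B x n. abs ` Y = S} = card (Pow (S - {Max S}))"
    by (simp add: phi_B_abs_fibre[OF assms] card_image)
  also have "\<dots> = 2 ^ (card S - 1)"
    using \<open>finite S\<close> \<open>Max S \<in> S\<close> by (simp add: card_Pow)
  finally show ?thesis .
qed

lemma card_phi_B_abs_in:
  assumes T: "\<T> \<subseteq> Pow (B_pos x n) - {{}}"
  shows "card {Y \<in> phi_B x n. abs ` Y \<in> \<T>} = (\<Sum>S\<in>\<T>. 2 ^ (card S - 1))"
proof -
  let ?A = "{Y \<in> phi_B x n. abs ` Y \<in> \<T>}"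
  have "finite \<T>" using T finite_B_pos by (meson finite_Diff finite_Pow_iff finite_subset)
  moreover have "finite ?A" using finite_phi_B by simp
  moreover have "(\<lambda>Y. abs ` Y) ` ?A \<subseteq> \<T>" by auto
  ultimately have "card ?A = (\<Sum>S\<in>\<T>. card {Y \<in> ?A. abs ` Y = S})"
    using sum.group[of ?A \<T> "\<lambda>Y. abs ` Y" "\<lambda>_. 1::nat"] by simp
  also have "\<dots> = (\<Sum>S\<in>\<T>. card {Y \<in> phi_B x n. abs ` Y = S})"
    by (intro sum.cong refl arg_cong[where f = card]) auto
  also have "\<dots> = (\<Sum>S\<in>\<T>. 2 ^ (card S - 1))"
    using T by (intro sum.cong refl card_phi_B_abs_fibre) auto
  finally show ?thesis .
qed

lemma card_phi_B: "card (phi_B x n) = (\<Sum>i=1..n. 2 ^ (i - 1) * (n choose i))"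
proof -
  have "phi_B x n = {Y \<in> phi_B x n. abs ` Y \<in> Pow (B_pos x n) - {{}}}"
    using abs_image_phi_B by auto
  then have "card (phi_B x n) = (\<Sum>S\<in>Pow (B_pos x n) - {{}}. 2 ^ (card S - 1))"
    using card_phi_B_abs_in[of "Pow (B_pos x n) - {{}}"] by simp
  then show ?thesis
    using sum_nonempty_subsets_by_card[OF finite_B_pos, of "\<lambda>i. (2::nat) ^ (i - 1)"] card_B_pos by simp
qed

end

locale hb_graph = increasing_pos_seq +
  fixes k :: nat
  assumes k_pos: "1 \<le> k" and k_less_n: "k < n"
begin

lemma HB_V1_in_phi_B:
  assumes "X \<in> HB_V1 x n k"
  shows "X \<in> phi_B x n" and "abs ` X = X"
proof -
  have "X \<subseteq> B_pos x n" "X \<noteq> {}" using assms k_pos unfolding HB_V1_def by auto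
  then show "X \<in> phi_B x n" "abs ` X = X" by (rule B_pos_subset_in_phi_B)+
qed

lemma HB_verts_eq: "HB_verts x n k = phi_B x n"
  unfolding HB_verts_def HB_V2_def using HB_V1_in_phi_B by blast

lemma finite_HB_V1: "finite (HB_V1 x n k)"
  unfolding HB_V1_def using finite_B_pos by simp

lemma card_HB_V1: "card (HB_V1 x n k) = n choose k"
  unfolding HB_V1_def using n_subsets[OF finite_B_pos] card_B_pos by simp

lemma HB_V1_comparable_eq:
  assumes X: "X \<in> HB_V1 x n k" and Y: "Y \<in> HB_V1 x n k"
    and "X \<subseteq> abs ` Y \<or> abs ` Y \<subseteq> X"
  shows "Y = X"
proof -
  have "finite X" "finite Y" "card X = card Y"
    using X Y finite_B_pos finite_subset unfolding HB_V1_def by auto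
  moreover have "X \<subseteq> Y \<or> Y \<subseteq> X" using assms(3) HB_V1_in_phi_B(2)[OF Y] by simp
  ultimately show ?thesis using card_subset_eq by metis
qed

lemma mem_HB_edges:
  "X \<in> HB_V1 x n k \<Longrightarrow> Y \<in> HB_V2 x n k \<Longrightarrow> X \<subseteq> abs ` Y \<or> abs ` Y \<subseteq> X \<Longrightarrow> {X, Y} \<in> HB_edges x n k"
  unfolding HB_edges_def by blast

definition HB_nbrs :: "real set \<Rightarrow> real set set" where
  "HB_nbrs X = {Y \<in> HB_V2 x n k. X \<subseteq> abs ` Y \<or> abs ` Y \<subseteq> X}"

lemma HB_edges_eq: "HB_edges x n k = {{X, Y} | X Y. X \<in> HB_V1 x n k \<and> Y \<in> HB_nbrs X}"
  unfolding HB_edges_def HB_nbrs_def by blast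

lemma HB_nbrs_eq:
  assumes X: "X \<in> HB_V1 x n k"
  shows "HB_nbrs X = {Y \<in> phi_B x n.
    abs ` Y \<in> (Pow X - {{}}) \<union> (\<union>) X ` (Pow (B_pos x n - X) - {{}})} - {X}"
proof (intro set_eqI)
  fix Y
  have XP: "X \<subseteq> B_pos x n" using X unfolding HB_V1_def by blast
  have "Y \<in> HB_nbrs X \<longleftrightarrow> Y \<in> phi_B x n \<and> (X \<subseteq> abs ` Y \<or> abs ` Y \<subseteq> X) \<and> Y \<noteq> X"
  proof
    assume "Y \<in> HB_nbrs X"
    then show "Y \<in> phi_B x n \<and> (X \<subseteq> abs ` Y \<or> abs ` Y \<subseteq> X) \<and> Y \<noteq> X"
      using X unfolding HB_nbrs_def HB_V2_def by auto
  next
    assume Y: "Y \<in> phi_B x n \<and> (X \<subseteq> abs ` Y \<or> abs ` Y \<subseteq> X) \<and> Y \<noteq> X"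
    then have "Y \<notin> HB_V1 x n k" using HB_V1_comparable_eq[OF X] by metis
    then show "Y \<in> HB_nbrs X" using Y unfolding HB_nbrs_def HB_V2_def by simp
  qed
  also have "\<dots> \<longleftrightarrow> Y \<in> {Y \<in> phi_B x n.
      abs ` Y \<in> (Pow X - {{}}) \<union> (\<union>) X ` (Pow (B_pos x n - X) - {{}})} - {X}"
    using comparable_subsets_iff[OF _ _ XP, of "abs ` Y"] abs_image_phi_B[of Y] by auto
  finally show "Y \<in> HB_nbrs X \<longleftrightarrow> Y \<in> {Y \<in> phi_B x n.
      abs ` Y \<in> (Pow X - {{}}) \<union> (\<union>) X ` (Pow (B_pos x n - X) - {{}})} - {X}" .
qed

lemma card_HB_nbrs:
  assumes X: "X \<in> HB_V1 x n k"
  shows "card (HB_nbrs X) + 1 = (\<Sum>s=1..k. 2 ^ (s - 1) * (k choose s))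
    + (\<Sum>t=1..n-k. 2 ^ (k + t - 1) * ((n - k) choose t))"
proof -
  have XP: "X \<subseteq> B_pos x n" and cardX: "card X = k" using X unfolding HB_V1_def by auto
  have "finite X" using XP finite_B_pos finite_subset by blast
  define T1 where "T1 = Pow X - {{}}"
  define T2 where "T2 = (\<union>) X ` (Pow (B_pos x n - X) - {{}})"
  let ?A = "{Y \<in> phi_B x n. abs ` Y \<in> T1 \<union> T2}"
  have "X \<in> T1" unfolding T1_def using cardX k_pos by auto
  then have "X \<in> ?A" using HB_V1_in_phi_B[OF X] by simp
  moreover have "finite ?A" using finite_phi_B by simp
  ultimately have "card (?A - {X}) + 1 = card ?A"
    using card_Suc_Diff1 by (simp only: Suc_eq_plus1)
  moreover have "HB_nbrs X = ?A - {X}"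
    unfolding HB_nbrs_eq[OF X] T1_def T2_def by simp
  ultimately have "card (HB_nbrs X) + 1 = card ?A" by simp
  also have "\<dots> = (\<Sum>S\<in>T1 \<union> T2. 2 ^ (card S - 1))"
  proof (rule card_phi_B_abs_in)
    show "T1 \<union> T2 \<subseteq> Pow (B_pos x n) - {{}}" using XP unfolding T1_def T2_def by blast
  qed
  also have "\<dots> = (\<Sum>S\<in>T1. 2 ^ (card S - 1)) + (\<Sum>S\<in>T2. 2 ^ (card S - 1))"
  proof (rule sum.union_disjoint)
    show "finite T1" "finite T2" using \<open>finite X\<close> finite_B_pos unfolding T1_def T2_def by simp_all
    show "T1 \<inter> T2 = {}" unfolding T1_def T2_def by blast
  qed
  also have "(\<Sum>S\<in>T1. 2 ^ (card S - 1)) = (\<Sum>s=1..k. 2 ^ (s - 1) * (k choose s))"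
    unfolding T1_def using sum_nonempty_subsets_by_card[OF \<open>finite X\<close>, of "\<lambda>s. (2::nat) ^ (s - 1)"] cardX
    by simp
  also have "(\<Sum>S\<in>T2. 2 ^ (card S - 1)) = (\<Sum>t=1..n-k. 2 ^ (k + t - 1) * ((n - k) choose t))"
    unfolding T2_def using sum_nonempty_extensions_by_card[OF finite_B_pos XP, of "\<lambda>s. (2::nat) ^ (s - 1)"]
      cardX card_B_pos by simp
  finally show ?thesis .
qed

lemma exists_HB_V1_comparable:
  assumes A: "A \<subseteq> B_pos x n"
  shows "\<exists>X\<in>HB_V1 x n k. X \<subseteq> A \<or> A \<subseteq> X"
proof (cases "k \<le> card A")
  case True
  then obtain X where "X \<subseteq> A" "card X = k" by (meson obtain_subset_with_card_n)
  then show ?thesis using A unfolding HB_V1_def by blast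
next
  case False
  have "finite A" using A finite_B_pos finite_subset by blast
  have "card (B_pos x n - A) = n - card A"
    using card_Diff_subset[OF \<open>finite A\<close> A] card_B_pos by simp
  then have "k - card A \<le> card (B_pos x n - A)" using False k_less_n by simp
  then obtain W where W: "W \<subseteq> B_pos x n - A" "card W = k - card A" "finite W"
    by (meson obtain_subset_with_card_n)
  then have "card (A \<union> W) = k" using card_Un_disjoint[OF \<open>finite A\<close> W(3)] False by auto
  then have "A \<union> W \<in> HB_V1 x n k" using A W unfolding HB_V1_def by blast
  then show ?thesis by blast
qed

lemma union_in_HB_V2:
  assumes X: "X \<in> HB_V1 x n k" and X': "X' \<in> HB_V1 x n k" and "X \<noteq> X'"
  shows "X \<union> X' \<in> HB_V2 x n k"
proof -
  have sub: "X \<union> X' \<subseteq> B_pos x n" "X \<union> X' \<noteq> {}" "X \<subseteq> B_pos x n" "X' \<subseteq> B_pos x n"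
    using X X' k_pos unfolding HB_V1_def by auto
  have "X \<union> X' \<notin> HB_V1 x n k"
  proof
    assume "X \<union> X' \<in> HB_V1 x n k"
    then have "X \<union> X' = X" "X \<union> X' = X'"
      using HB_V1_comparable_eq X X' B_pos_subset_in_phi_B(2)[OF sub(1,2)] by blast+
    then show False using \<open>X \<noteq> X'\<close> by simp
  qed
  then show ?thesis using B_pos_subset_in_phi_B(1)[OF sub(1,2)] unfolding HB_V2_def by blast
qed

lemma graph_connected_HB: "graph_connected (HB_verts x n k) (HB_edges x n k)"
proof (rule graph_connected_via_hubs[where A = "HB_V1 x n k"])
  show "HB_V1 x n k \<subseteq> HB_verts x n k" unfolding HB_verts_def by blast
  obtain X where "X \<subseteq> B_pos x n" "card X = k"
    using obtain_subset_with_card_n[of k "B_pos x n"] card_B_pos k_less_n by auto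
  then show "HB_V1 x n k \<noteq> {}" unfolding HB_V1_def by blast
next
  fix Y assume Y: "Y \<in> HB_verts x n k"
  show "\<exists>X\<in>HB_V1 x n k. Y = X \<or> {X, Y} \<in> HB_edges x n k"
  proof (cases "Y \<in> HB_V1 x n k")
    case False
    then have "Y \<in> HB_V2 x n k" using Y unfolding HB_verts_def by blast
    moreover have "abs ` Y \<subseteq> B_pos x n"
      using abs_image_phi_B Y unfolding HB_verts_eq by blast
    then obtain X where "X \<in> HB_V1 x n k" "X \<subseteq> abs ` Y \<or> abs ` Y \<subseteq> X"
      using exists_HB_V1_comparable by blast
    ultimately show ?thesis using mem_HB_edges by blast
  qed blast
next
  fix X X' assume X: "X \<in> HB_V1 x n k" and X': "X' \<in> HB_V1 x n k" and "X \<noteq> X'"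
  then have V2: "X \<union> X' \<in> HB_V2 x n k" by (rule union_in_HB_V2)
  have "abs ` (X \<union> X') = X \<union> X'"
    using HB_V1_in_phi_B(2)[OF X] HB_V1_in_phi_B(2)[OF X'] by (simp add: image_Un)
  then have "{X, X \<union> X'} \<in> HB_edges x n k" "{X', X \<union> X'} \<in> HB_edges x n k"
    using mem_HB_edges[OF X V2] mem_HB_edges[OF X' V2] by simp_all
  then show "\<exists>Y. {X, Y} \<in> HB_edges x n k \<and> {Y, X'} \<in> HB_edges x n k"
    by (intro exI[of _ "X \<union> X'"]) (simp add: insert_commute)
qed

lemma card_HB_edges:
  "card (HB_edges x n k) = (\<Sum>X\<in>HB_V1 x n k. card (HB_nbrs X))"
  unfolding HB_edges_eq
proof (rule card_bipartite_edges[OF finite_HB_V1])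
  fix X
  have "HB_nbrs X \<subseteq> phi_B x n - HB_V1 x n k" unfolding HB_nbrs_def HB_V2_def by blast
  then show "finite (HB_nbrs X)" "HB_nbrs X \<inter> HB_V1 x n k = {}"
    using finite_phi_B finite_subset by blast+
qed

lemma circuit_rank_HB:
  "circuit_rank (HB_verts x n k) (HB_edges x n k) =
     int (n choose k) *
       ((\<Sum>s=1..k. 2^(s-1) * int (k choose s)) - 1
        + (\<Sum>t=1..n-k. 2^(k+t-1) * int ((n-k) choose t)))
     - (\<Sum>i=1..n. 2^(i-1) * int (n choose i)) + 1"
proof -
  define c where "c = (\<Sum>s=1..k. 2^(s-1) * int (k choose s)) - 1
    + (\<Sum>t=1..n-k. 2^(k+t-1) * int ((n-k) choose t))"
  have "int (card (HB_nbrs X)) = c" if "X \<in> HB_V1 x n k" for X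
    using arg_cong[OF card_HB_nbrs[OF that], of int] unfolding c_def
    by (simp add: of_nat_sum)
  then have "int (card (HB_edges x n k)) = int (n choose k) * c"
    by (simp add: card_HB_edges of_nat_sum card_HB_V1)
  moreover have "int (card (HB_verts x n k)) = (\<Sum>i=1..n. 2^(i-1) * int (n choose i))"
    by (simp add: HB_verts_eq card_phi_B of_nat_sum)
  ultimately show ?thesis unfolding circuit_rank_def c_def by simp
qed

end

theorem mainTheorem9:
  fixes x :: "nat \<Rightarrow> real" and n k :: nat
  assumes "n \<ge> 2" and "1 \<le> k" and "k < n"
    and "0 < x 1"
    and "\<And>i j. 1 \<le> i \<Longrightarrow> i < j \<Longrightarrow> j \<le> n \<Longrightarrow> x i < x j"
  shows "graph_connected (HB_verts x n k) (HB_edges x n k) \<and>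
         circuit_rank (HB_verts x n k) (HB_edges x n k) =
           int (n choose k) *
             ((\<Sum>s=1..k. 2^(s-1) * int (k choose s)) - 1
              + (\<Sum>t=1..n-k. 2^(k+t-1) * int ((n-k) choose t)))
           - (\<Sum>i=1..n. 2^(i-1) * int (n choose i)) + 1"
proof -
  interpret hb_graph x n k
    using assms by unfold_locales auto
  show ?thesis using graph_connected_HB circuit_rank_HB by blast
qed

end
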